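(* Let $(P,\leqslant)$ be a conditionally-complete interpolating poset and let $P^* := \{x \in P : \exists\, y \in P,\ y \ll x\}$ with the induced order. Then $(P^* )^* = P^*$, where $(P^* )^* := \{x \in P^* : \exists\, y \in P^*,\ y \ll_{P^*} x\}$.
   Context: A poset is conditionally-complete if every nonempty subset bounded above has a supremum. A nonempty subset $D$ is directed if any two elements of $D$ have an upper bound in $D$. For a poset $R$ and $x,y \in R$, $x \ll_R y$ means: for every directed subset $D$ of $R$ bounded above in $R$ with supremum $d_0$ in $R$, $y \leqslant d_0$ implies $x \leqslant d$ for some $d \in D$; write $\ll$ for $\ll_P$. $P$ is interpolating if whenever $x \ll y$ there is $z \in P$ with $x \ll z \ll y$. *)

theory Defs
  imports Main
begin

text \<open>A poset is modelled as a carrier set S of a type of class order, with the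
induced order. All notions are relative to the carrier S.\<close>

definition upper_bound :: "'a::order set \<Rightarrow> 'a set \<Rightarrow> 'a \<Rightarrow> bool" where
  "upper_bound S A u \<longleftrightarrow> u \<in> S \<and> (\<forall>a\<in>A. a \<le> u)"

definition bounded_above :: "'a::order set \<Rightarrow> 'a set \<Rightarrow> bool" where
  "bounded_above S A \<longleftrightarrow> (\<exists>u. upper_bound S A u)"

definition is_sup :: "'a::order set \<Rightarrow> 'a set \<Rightarrow> 'a \<Rightarrow> bool" where
  "is_sup S A s \<longleftrightarrow> upper_bound S A s \<and> (\<forall>u. upper_bound S A u \<longrightarrow> s \<le> u)"

definition cond_complete :: "'a::order set \<Rightarrow> bool" where
  "cond_complete S \<longleftrightarrow>
     (\<forall>A. A \<subseteq> S \<and> A \<noteq> {} \<and> bounded_above S A \<longrightarrow> (\<exists>s. is_sup S A s))"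

definition directed :: "'a::order set \<Rightarrow> 'a set \<Rightarrow> bool" where
  "directed S D \<longleftrightarrow> D \<noteq> {} \<and> D \<subseteq> S \<and>
     (\<forall>x\<in>D. \<forall>y\<in>D. \<exists>z\<in>D. x \<le> z \<and> y \<le> z)"

definition way_below :: "'a::order set \<Rightarrow> 'a \<Rightarrow> 'a \<Rightarrow> bool" where
  "way_below S x y \<longleftrightarrow>
     (\<forall>D d0. directed S D \<and> bounded_above S D \<and> is_sup S D d0 \<and> y \<le> d0
        \<longrightarrow> (\<exists>d\<in>D. x \<le> d))"

definition interpolating :: "'a::order set \<Rightarrow> bool" where
  "interpolating S \<longleftrightarrow>
     (\<forall>x\<in>S. \<forall>y\<in>S. way_below S x y \<longrightarrow>
        (\<exists>z\<in>S. way_below S x z \<and> way_below S z y))"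

definition star :: "'a::order set \<Rightarrow> 'a set" where
  "star S = {x \<in> S. \<exists>y\<in>S. way_below S y x}"

end

theory Submission
  imports Defs
begin

text \<open>The set \<open>P\<^sup>*\<close> is an up-set of \<open>P\<close>. Hence a directed set \<open>D \<subseteq> P\<^sup>*\<close> bounded in \<open>P\<^sup>*\<close>
has a supremum \<open>s\<close> in \<open>P\<close> by conditional completeness, and \<open>s\<close> already lies in \<open>P\<^sup>*\<close>; so
\<open>s\<close> lies below the supremum of \<open>D\<close> in \<open>P\<^sup>*\<close>, and \<open>z \<ll> x\<close> implies \<open>z \<ll>\<^bsub>P\<^sup>*\<^esub> x\<close>.
Given \<open>y \<ll> x\<close>, interpolation yields \<open>y \<ll> z \<ll> x\<close>; then \<open>z \<in> P\<^sup>*\<close> witnesses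
\<open>x \<in> (P\<^sup>*)\<^sup>*\<close>.\<close>

lemma star_subset: "star S \<subseteq> S"
  unfolding star_def by auto

lemma way_below_mono_right:
  assumes "way_below S y d" and "d \<le> s"
  shows "way_below S y s"
  using assms unfolding way_below_def by (meson order_trans)

lemma star_upward_closed:
  assumes "d \<in> star S" and "d \<le> s" and "s \<in> S"
  shows "s \<in> star S"
  using assms way_below_mono_right unfolding star_def by blast

lemma way_below_restrict_up_set:
  assumes "cond_complete S" and "T \<subseteq> S"
    and up: "\<And>d s. d \<in> T \<Longrightarrow> d \<le> s \<Longrightarrow> s \<in> S \<Longrightarrow> s \<in> T"
    and "way_below S z x"
  shows "way_below T z x"
  unfolding way_below_def
proof (intro allI impI, elim conjE)
  fix D d0
  assume dir: "directed T D" and bdd: "bounded_above T D"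
    and sup: "is_sup T D d0" and "x \<le> d0"
  have dirS: "directed S D" using dir \<open>T \<subseteq> S\<close> unfolding directed_def by auto
  have bddS: "bounded_above S D"
    using bdd \<open>T \<subseteq> S\<close> unfolding bounded_above_def upper_bound_def by auto
  obtain s where s: "is_sup S D s"
    using \<open>cond_complete S\<close> dirS bddS unfolding cond_complete_def directed_def by blast
  obtain d where "d \<in> D" using dir unfolding directed_def by auto
  have "s \<in> T"
    using up[of d s] \<open>d \<in> D\<close> dir s unfolding directed_def is_sup_def upper_bound_def by auto
  then have "d0 \<le> s" using s sup unfolding is_sup_def upper_bound_def by auto
  with \<open>x \<le> d0\<close> have "x \<le> s" by simp
  then show "\<exists>d\<in>D. z \<le> d"
    using \<open>way_below S z x\<close> dirS bddS s unfolding way_below_def by blast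
qed

lemma way_below_star:
  assumes "cond_complete P" and "way_below P z x"
  shows "way_below (star P) z x"
  using way_below_restrict_up_set[OF assms(1) star_subset star_upward_closed assms(2)] .

theorem proposition2p6:
  fixes P :: "'a::order set"
  assumes "cond_complete P"
    and "interpolating P"
  shows "star (star P) = star P"
proof
  show "star (star P) \<subseteq> star P" by (rule star_subset)
next
  show "star P \<subseteq> star (star P)"
  proof
    fix x assume x: "x \<in> star P"
    then obtain y where "x \<in> P" "y \<in> P" "way_below P y x"
      unfolding star_def by auto
    then obtain z where "z \<in> P" "way_below P y z" and zx: "way_below P z x"
      using assms(2) unfolding interpolating_def by blast
    then have "z \<in> star P" using \<open>y \<in> P\<close> unfolding star_def by auto
    with x way_below_star[OF assms(1) zx] show "x \<in> star (star P)"
      unfolding star_def by auto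
  qed
qed

end
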